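(* Let $N\ge 3$ and let $M_N$ be $K_N$ with the edge $\{u,v\}$ removed. Consider the Moran process with mutants on $M_N$ and residents on $K_N$. For a configuration with $a$ mutants among the $N-2$ vertices other than $u,v$ and $b$ mutants among $\{u,v\}$ ($0\le a\le N-2$, $0\le b\le 2$), the probability of reaching the all-mutant state equals \[ \varphi(a,b)=\frac{(a+b)(N-2)+\tfrac12 b(b-1)}{(N-1)^2}. \] Conversely, with mutants on $K_N$ and residents on $M_N$, the probability of reaching the all-mutant state from such a configuration equals \[ \frac{(a+b)(N-2)+\tfrac12 b(3-b)}{(N-1)^2}. \]
   Context: Moran Birth-death process on two graphs (neutral case): $G^A$ (mutant graph) and $G^B$ (resident graph) are connected undirected simple graphs on the same vertex set $\{1,\dots,N\}$. Every vertex is occupied by one individual, of type $A$ (mutant) or type $B$ (resident). In each step, one individual is chosen uniformly at random to reproduce; its offspring (same type) replaces the individual at a uniformly random neighbor of the parent's vertex, neighbors taken in $G^A$ if the parent is type $A$ and in $G^B$ if type $B$. The all-$A$ and all-$B$ states are absorbing. $K_N$ denotes the complete graph. *)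

theory Defs
  imports Complex_Main
begin

text \<open>Vertex set {1..N}. A graph is a symmetric irreflexive adjacency predicate on it.
  A state of the Moran process is the set S of vertices occupied by mutants (type A).\<close>

definition vset :: "nat \<Rightarrow> nat set" where
  "vset N = {1..N}"

definition nbrs :: "(nat \<Rightarrow> nat \<Rightarrow> bool) \<Rightarrow> nat \<Rightarrow> nat \<Rightarrow> nat set" where
  "nbrs G N x = {y \<in> vset N. G x y}"

definition complete_graph :: "nat \<Rightarrow> nat \<Rightarrow> bool" where
  "complete_graph x y \<longleftrightarrow> x \<noteq> y"

definition complete_minus_edge :: "nat \<Rightarrow> nat \<Rightarrow> nat \<Rightarrow> nat \<Rightarrow> bool" where
  "complete_minus_edge u v x y \<longleftrightarrow> x \<noteq> y \<and> {x, y} \<noteq> {u, v}"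

text \<open>One-step transition probability from mutant set S to mutant set T of the
  Birth-death Moran process (neutral): the parent x is uniform on the N vertices,
  the offspring replaces a uniform neighbour y of x, in GA if x is a mutant, in GB otherwise.\<close>
definition moran_step :: "(nat \<Rightarrow> nat \<Rightarrow> bool) \<Rightarrow> (nat \<Rightarrow> nat \<Rightarrow> bool) \<Rightarrow> nat \<Rightarrow>
    nat set \<Rightarrow> nat set \<Rightarrow> real" where
  "moran_step GA GB N S T =
     (\<Sum>x\<in>vset N. let G = (if x \<in> S then GA else GB) in
        (\<Sum>y\<in>nbrs G N x.
           (1 / real N) * (1 / real (card (nbrs G N x))) *
           (if T = (if x \<in> S then insert y S else S - {y}) then 1 else 0)))"

fun moran_nstep :: "(nat \<Rightarrow> nat \<Rightarrow> bool) \<Rightarrow> (nat \<Rightarrow> nat \<Rightarrow> bool) \<Rightarrow> nat \<Rightarrow> nat \<Rightarrow>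
    nat set \<Rightarrow> nat set \<Rightarrow> real" where
  "moran_nstep GA GB N 0 S T = (if S = T then 1 else 0)"
| "moran_nstep GA GB N (Suc n) S T =
     (\<Sum>U\<in>Pow (vset N). moran_step GA GB N S U * moran_nstep GA GB N n U T)"

text \<open>Since the all-A state is absorbing, the probability of reaching it from S is the limit
  of the probability of being in it after n steps.\<close>
definition fixation_prob_is ::
  "(nat \<Rightarrow> nat \<Rightarrow> bool) \<Rightarrow> (nat \<Rightarrow> nat \<Rightarrow> bool) \<Rightarrow> nat \<Rightarrow> nat set \<Rightarrow> real \<Rightarrow> bool" where
  "fixation_prob_is GA GB N S p \<longleftrightarrow>
     (\<lambda>n. moran_nstep GA GB N n S (vset N)) \<longlonglongrightarrow> p"

end

theory Submission
  imports Defs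
begin

text \<open>Write \<open>\<phi>(T)\<close> for the claimed fixation probability of the mutant set \<open>T\<close>. It is harmonic
  for the chain, i.e. its expectation after one step equals its current value; after clearing the
  denominators \<open>(N - 1)(N - 2)\<close> coming from the vertex degrees this is a polynomial identity in
  \<open>N\<close> and \<open>|T|\<close>, checked separately for each way of placing mutants on \<open>u\<close> and \<open>v\<close>. Since
  \<open>\<phi>\<close> is \<open>0\<close> and \<open>1\<close> at the absorbing states, it remains to see that the chain leaves the
  transient states: \<open>\<phi> - \<phi>\<^sup>2\<close> drops in expectation by the one-step variance of \<open>\<phi>\<close>, which is
  bounded below on transient states, so the expected time spent there is finite.\<close>

section \<open>One-step expectation of the Moran chain\<close>

definition moran_graph ::
  "(nat \<Rightarrow> nat \<Rightarrow> bool) \<Rightarrow> (nat \<Rightarrow> nat \<Rightarrow> bool) \<Rightarrow> nat set \<Rightarrow> nat \<Rightarrow> nat \<Rightarrow> nat \<Rightarrow> bool" where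
  "moran_graph GA GB S x = (if x \<in> S then GA else GB)"

definition moran_succ :: "nat set \<Rightarrow> nat \<Rightarrow> nat \<Rightarrow> nat set" where
  "moran_succ S x y = (if x \<in> S then insert y S else S - {y})"

definition moran_expect ::
  "(nat \<Rightarrow> nat \<Rightarrow> bool) \<Rightarrow> (nat \<Rightarrow> nat \<Rightarrow> bool) \<Rightarrow> nat \<Rightarrow> (nat set \<Rightarrow> real) \<Rightarrow> nat set \<Rightarrow> real" where
  "moran_expect GA GB N f S =
     (\<Sum>x\<in>vset N. \<Sum>y\<in>nbrs (moran_graph GA GB S x) N x.
        f (moran_succ S x y) / (real N * real (card (nbrs (moran_graph GA GB S x) N x))))"

definition moran_nexpect ::
  "(nat \<Rightarrow> nat \<Rightarrow> bool) \<Rightarrow> (nat \<Rightarrow> nat \<Rightarrow> bool) \<Rightarrow> nat \<Rightarrow> nat \<Rightarrow> (nat set \<Rightarrow> real) \<Rightarrow> nat set \<Rightarrow> real" where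
  "moran_nexpect GA GB N n f S = (\<Sum>T\<in>Pow (vset N). moran_nstep GA GB N n S T * f T)"

lemma finite_vset [simp]: "finite (vset N)"
  by (simp add: vset_def)

lemma card_vset [simp]: "card (vset N) = N"
  by (simp add: vset_def)

lemma nbrs_subset_vset: "nbrs G N x \<subseteq> vset N"
  by (auto simp: nbrs_def)

lemma finite_nbrs [simp]: "finite (nbrs G N x)"
  by (rule finite_subset[OF nbrs_subset_vset finite_vset])

lemma moran_succ_subset_vset:
  "S \<subseteq> vset N \<Longrightarrow> y \<in> nbrs G N x \<Longrightarrow> moran_succ S x y \<subseteq> vset N"
  using nbrs_subset_vset[of G N x] by (auto simp: moran_succ_def)

lemma moran_step_nonneg: "moran_step GA GB N S T \<ge> 0"
  unfolding moran_step_def Let_def by (intro sum_nonneg) auto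

lemma moran_nstep_nonneg: "moran_nstep GA GB N n S T \<ge> 0"
  by (induction n arbitrary: S) (auto intro!: sum_nonneg mult_nonneg_nonneg moran_step_nonneg)

lemma moran_step_expectation:
  assumes "S \<subseteq> vset N"
  shows "(\<Sum>T\<in>Pow (vset N). moran_step GA GB N S T * f T) = moran_expect GA GB N f S"
proof -
  let ?G = "moran_graph GA GB S"
  let ?p = "\<lambda>x. 1 / real N * (1 / real (card (nbrs (?G x) N x)))"
  have "(\<Sum>T\<in>Pow (vset N). moran_step GA GB N S T * f T)
      = (\<Sum>x\<in>vset N. \<Sum>y\<in>nbrs (?G x) N x. \<Sum>T\<in>Pow (vset N).
           if T = moran_succ S x y then ?p x * f T else 0)"
    unfolding moran_step_def Let_def moran_graph_def moran_succ_def sum_distrib_right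
    by (subst sum.swap, rule sum.cong[OF refl], subst sum.swap) (auto intro!: sum.cong)
  also have "\<dots> = moran_expect GA GB N f S"
    unfolding moran_expect_def
    using moran_succ_subset_vset[OF assms] by (intro sum.cong refl) (simp add: sum.delta')
  finally show ?thesis .
qed

lemma moran_nexpect_0: "S \<subseteq> vset N \<Longrightarrow> moran_nexpect GA GB N 0 f S = f S"
  unfolding moran_nexpect_def
  by (subst sum.cong[OF refl, of _ _ "\<lambda>T. if S = T then f T else 0"]) auto

lemma moran_nexpect_Suc:
  assumes "S \<subseteq> vset N"
  shows "moran_nexpect GA GB N (Suc n) f S = moran_expect GA GB N (moran_nexpect GA GB N n f) S"
proof -
  have "moran_nexpect GA GB N (Suc n) f S
      = (\<Sum>U\<in>Pow (vset N). moran_step GA GB N S U * moran_nexpect GA GB N n f U)"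
    unfolding moran_nexpect_def moran_nstep.simps sum_distrib_left sum_distrib_right
    by (subst sum.swap) (simp add: mult.assoc)
  then show ?thesis by (simp add: moran_step_expectation[OF assms])
qed

lemma moran_expect_add:
  "moran_expect GA GB N (\<lambda>T. f T + g T) S = moran_expect GA GB N f S + moran_expect GA GB N g S"
  unfolding moran_expect_def by (simp add: sum.distrib add_divide_distrib)

lemma moran_expect_sum:
  "moran_expect GA GB N (\<lambda>T. \<Sum>k\<in>K. f k T) S = (\<Sum>k\<in>K. moran_expect GA GB N (f k) S)"
  unfolding moran_expect_def sum_divide_distrib by (subst sum.swap, rule sum.cong[OF refl], rule sum.swap)

lemma moran_expect_affine:
  "moran_expect GA GB N (\<lambda>T. a * f T + b) S
     = a * moran_expect GA GB N f S + b * moran_expect GA GB N (\<lambda>_. 1) S"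
  unfolding moran_expect_def
  by (simp add: sum.distrib sum_distrib_left add_divide_distrib times_divide_eq_right del: sum_constant)

lemma moran_expect_cong:
  "S \<subseteq> vset N \<Longrightarrow> (\<And>T. T \<subseteq> vset N \<Longrightarrow> f T = g T) \<Longrightarrow>
   moran_expect GA GB N f S = moran_expect GA GB N g S"
  unfolding moran_expect_def using moran_succ_subset_vset by (auto intro!: sum.cong)

lemma moran_expect_nonneg:
  "S \<subseteq> vset N \<Longrightarrow> (\<And>T. T \<subseteq> vset N \<Longrightarrow> f T \<ge> 0) \<Longrightarrow> moran_expect GA GB N f S \<ge> 0"
  unfolding moran_expect_def using moran_succ_subset_vset by (auto intro!: sum_nonneg)

lemma moran_expect_one:
  assumes "N > 0" and "\<And>x. x \<in> vset N \<Longrightarrow> nbrs GA N x \<noteq> {} \<and> nbrs GB N x \<noteq> {}"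
  shows "moran_expect GA GB N (\<lambda>_. 1) S = 1"
proof -
  have "moran_expect GA GB N (\<lambda>_. 1) S = (\<Sum>x\<in>vset N. 1 / real N)"
    unfolding moran_expect_def using assms(2)
    by (intro sum.cong refl) (auto simp: moran_graph_def)
  then show ?thesis using assms(1) by simp
qed

lemma moran_expect_ge_transition:
  assumes S: "S \<subseteq> vset N" and f: "\<And>T. T \<subseteq> vset N \<Longrightarrow> f T \<ge> 0"
    and x: "x \<in> vset N" and y: "y \<in> nbrs (moran_graph GA GB S x) N x"
  shows "f (moran_succ S x y) / real N ^ 2 \<le> moran_expect GA GB N f S"
proof -
  let ?G = "moran_graph GA GB S"
  let ?t = "\<lambda>x y. f (moran_succ S x y) / (real N * real (card (nbrs (?G x) N x)))"
  have t: "?t x' y' \<ge> 0" if "y' \<in> nbrs (?G x') N x'" for x' y'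
    using f moran_succ_subset_vset[OF S that] by simp
  have "card (nbrs (?G x) N x) \<le> N"
    using card_mono[OF finite_vset nbrs_subset_vset] by (metis card_vset)
  moreover have "card (nbrs (?G x) N x) > 0"
    using y card_gt_0_iff by fastforce
  ultimately have "f (moran_succ S x y) / real N ^ 2 \<le> ?t x y"
    using f[OF moran_succ_subset_vset[OF S y]]
    by (auto simp: power2_eq_square intro!: divide_left_mono mult_left_mono mult_pos_pos)
  also have "\<dots> \<le> (\<Sum>y'\<in>nbrs (?G x) N x. ?t x y')"
    by (rule member_le_sum[OF y]) (use t in auto)
  also have "\<dots> \<le> moran_expect GA GB N f S"
    unfolding moran_expect_def
    by (rule member_le_sum[OF x, where f="\<lambda>x'. \<Sum>y'\<in>nbrs (?G x') N x'. ?t x' y'"])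
       (auto intro!: sum_nonneg t)
  finally show ?thesis .
qed

section \<open>Harmonic functions and fixation probabilities\<close>

lemma moran_nexpect_telescope:
  assumes "S \<subseteq> vset N"
    and step: "\<And>T. T \<subseteq> vset N \<Longrightarrow> moran_expect GA GB N \<psi> T = \<psi> T - h T"
  shows "moran_nexpect GA GB N n \<psi> S + (\<Sum>k<n. moran_nexpect GA GB N k h S) = \<psi> S"
  using assms(1)
proof (induction n arbitrary: S)
  case 0
  then show ?case by (simp add: moran_nexpect_0)
next
  case (Suc n)
  let ?E = "moran_nexpect GA GB N"
  have "?E (Suc n) \<psi> S + (\<Sum>k<Suc n. ?E k h S)
      = h S + (moran_expect GA GB N (?E n \<psi>) S + (\<Sum>k<n. moran_expect GA GB N (?E k h) S))"
    unfolding sum.lessThan_Suc_shift using Suc.prems by (simp add: moran_nexpect_0 moran_nexpect_Suc)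
  also have "\<dots> = h S + moran_expect GA GB N (\<lambda>T. ?E n \<psi> T + (\<Sum>k<n. ?E k h T)) S"
    by (simp add: moran_expect_add moran_expect_sum)
  also have "\<dots> = h S + moran_expect GA GB N \<psi> S"
    using moran_expect_cong[OF Suc.prems Suc.IH] by simp
  also have "\<dots> = \<psi> S"
    using step[OF Suc.prems] by simp
  finally show ?case .
qed

lemma moran_nexpect_harmonic:
  assumes "S \<subseteq> vset N" and "\<And>T. T \<subseteq> vset N \<Longrightarrow> moran_expect GA GB N \<phi> T = \<phi> T"
  shows "moran_nexpect GA GB N n \<phi> S = \<phi> S"
  using moran_nexpect_telescope[of S N GA GB \<phi> "\<lambda>_. 0" n] assms
  by (simp add: moran_nexpect_def)

lemma moran_expect_variance:
  assumes "moran_expect GA GB N (\<lambda>_. 1) S = 1" and "moran_expect GA GB N \<phi> S = \<phi> S"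
  shows "moran_expect GA GB N (\<lambda>T. \<phi> T - \<phi> T ^ 2) S
           = \<phi> S - \<phi> S ^ 2 - moran_expect GA GB N (\<lambda>T. (\<phi> T - \<phi> S) ^ 2) S"
proof -
  have "moran_expect GA GB N (\<lambda>T. \<phi> T - \<phi> T ^ 2) S + moran_expect GA GB N (\<lambda>T. (\<phi> T - \<phi> S) ^ 2) S
      = moran_expect GA GB N (\<lambda>T. (1 - 2 * \<phi> S) * \<phi> T + \<phi> S ^ 2) S"
    unfolding moran_expect_add[symmetric] by (rule arg_cong[where f="\<lambda>f. moran_expect GA GB N f S"])
      (simp add: fun_eq_iff power2_eq_square algebra_simps)
  also have "\<dots> = \<phi> S - \<phi> S ^ 2"
    unfolding moran_expect_affine assms by (simp add: algebra_simps power2_eq_square)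
  finally show ?thesis by simp
qed

definition transient_states :: "nat \<Rightarrow> nat set set" where
  "transient_states N = Pow (vset N) - {{}, vset N}"

lemma moran_transient_mass_tendsto_0:
  assumes S: "S \<subseteq> vset N"
    and one: "\<And>T. moran_expect GA GB N (\<lambda>_. 1) T = 1"
    and harm: "\<And>T. T \<subseteq> vset N \<Longrightarrow> moran_expect GA GB N \<phi> T = \<phi> T"
    and bnd: "\<And>T. T \<subseteq> vset N \<Longrightarrow> 0 \<le> \<phi> T \<and> \<phi> T \<le> 1"
    and "c > 0"
    and var: "\<And>T. T \<in> transient_states N \<Longrightarrow> c \<le> moran_expect GA GB N (\<lambda>T'. (\<phi> T' - \<phi> T) ^ 2) T"
  shows "(\<lambda>n. \<Sum>T\<in>transient_states N. moran_nstep GA GB N n S T) \<longlonglongrightarrow> 0"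
proof -
  let ?E = "moran_nexpect GA GB N"
  define \<psi> where "\<psi> T = \<phi> T - \<phi> T ^ 2" for T
  define h where "h T = moran_expect GA GB N (\<lambda>T'. (\<phi> T' - \<phi> T) ^ 2) T" for T
  define m where "m n = (\<Sum>T\<in>transient_states N. moran_nstep GA GB N n S T)" for n
  have \<psi>: "0 \<le> \<psi> T \<and> \<psi> T \<le> 1" if "T \<subseteq> vset N" for T
    using bnd[OF that] mult_left_le_one_le[of "\<phi> T" "\<phi> T"] zero_le_square[of "\<phi> T"]
    unfolding \<psi>_def power2_eq_square by linarith
  have h: "h T \<ge> 0" if "T \<subseteq> vset N" for T
    unfolding h_def using that by (intro moran_expect_nonneg) auto
  have telescope: "?E n \<psi> S + (\<Sum>k<n. ?E k h S) = \<psi> S" for n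
  proof (rule moran_nexpect_telescope[OF S])
    fix T assume "T \<subseteq> vset N"
    show "moran_expect GA GB N \<psi> T = \<psi> T - h T"
      unfolding \<psi>_def[abs_def] h_def using one harm[OF \<open>T \<subseteq> vset N\<close>] by (rule moran_expect_variance)
  qed
  have mass: "c * m k \<le> ?E k h S" for k
  proof -
    have "c * m k = (\<Sum>T\<in>transient_states N. moran_nstep GA GB N k S T * c)"
      unfolding m_def by (simp add: sum_distrib_left mult.commute)
    also have "\<dots> \<le> (\<Sum>T\<in>transient_states N. moran_nstep GA GB N k S T * h T)"
      unfolding h_def by (intro sum_mono mult_left_mono var moran_nstep_nonneg)
    also have "\<dots> \<le> ?E k h S"
      unfolding moran_nexpect_def transient_states_def
      by (rule sum_mono2) (auto intro!: mult_nonneg_nonneg moran_nstep_nonneg h)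
    finally show ?thesis .
  qed
  have "c * (\<Sum>k<n. m k) \<le> 1" for n
  proof -
    have "?E n \<psi> S \<ge> 0"
      unfolding moran_nexpect_def using \<psi> by (auto intro!: sum_nonneg mult_nonneg_nonneg moran_nstep_nonneg)
    have "c * (\<Sum>k<n. m k) \<le> (\<Sum>k<n. ?E k h S)"
      unfolding sum_distrib_left by (intro sum_mono mass)
    also have "\<dots> \<le> 1"
      using telescope[of n] \<psi>[OF S] \<open>?E n \<psi> S \<ge> 0\<close> by linarith
    finally show ?thesis .
  qed
  then have "(\<Sum>k<n. m k) \<le> 1 / c" for n
    using \<open>c > 0\<close> by (simp add: le_divide_eq mult.commute)
  moreover have "m n \<ge> 0" for n
    unfolding m_def by (intro sum_nonneg moran_nstep_nonneg)
  ultimately have "summable m"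
    by (intro summableI_nonneg_bounded)
  then have "m \<longlonglongrightarrow> 0"
    by (rule summable_LIMSEQ_zero)
  then show ?thesis
    unfolding m_def .
qed

theorem fixation_prob_is_harmonic:
  assumes S: "S \<subseteq> vset N" and "N > 0"
    and deg: "\<And>x. x \<in> vset N \<Longrightarrow> nbrs GA N x \<noteq> {} \<and> nbrs GB N x \<noteq> {}"
    and harm: "\<And>T. T \<subseteq> vset N \<Longrightarrow> moran_expect GA GB N \<phi> T = \<phi> T"
    and bnd: "\<And>T. T \<subseteq> vset N \<Longrightarrow> 0 \<le> \<phi> T \<and> \<phi> T \<le> 1"
    and "\<phi> {} = 0" and "\<phi> (vset N) = 1"
    and "c > 0"
    and var: "\<And>T. T \<in> transient_states N \<Longrightarrow> c \<le> moran_expect GA GB N (\<lambda>T'. (\<phi> T' - \<phi> T) ^ 2) T"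
  shows "fixation_prob_is GA GB N S (\<phi> S)"
proof -
  let ?P = "\<lambda>n. moran_nstep GA GB N n S"
  define m where "m n = (\<Sum>T\<in>transient_states N. ?P n T)" for n
  define r where "r n = (\<Sum>T\<in>transient_states N. ?P n T * \<phi> T)" for n
  have "m \<longlonglongrightarrow> 0"
    unfolding m_def using moran_transient_mass_tendsto_0[OF S _ harm bnd \<open>c > 0\<close> var]
      moran_expect_one[OF \<open>N > 0\<close> deg] by blast
  have split: "\<phi> S = ?P n (vset N) + r n" for n
  proof -
    have Pow: "Pow (vset N) = insert {} (insert (vset N) (transient_states N))"
      by (auto simp: transient_states_def)
    have "{} \<notin> insert (vset N) (transient_states N)" and "vset N \<notin> transient_states N"
      and "finite (transient_states N)"
      using \<open>N > 0\<close> by (auto simp: transient_states_def vset_def)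
    then have "moran_nexpect GA GB N n \<phi> S = ?P n (vset N) + r n"
      unfolding moran_nexpect_def Pow r_def using \<open>\<phi> {} = 0\<close> \<open>\<phi> (vset N) = 1\<close> by simp
    then show ?thesis
      using moran_nexpect_harmonic[OF S harm] by simp
  qed
  have r: "0 \<le> r n \<and> r n \<le> m n" for n
  proof -
    have "0 \<le> \<phi> T \<and> \<phi> T \<le> 1" if "T \<in> transient_states N" for T
      using bnd that by (simp add: transient_states_def)
    then show ?thesis
      unfolding r_def m_def
      by (auto intro!: sum_nonneg sum_mono mult_nonneg_nonneg mult_right_le_one_le moran_nstep_nonneg)
  qed
  have lower: "\<phi> S - m n \<le> ?P n (vset N)" and upper: "?P n (vset N) \<le> \<phi> S" for n
    using split[of n] r[of n] by linarith+
  have lim: "(\<lambda>n. \<phi> S - m n) \<longlonglongrightarrow> \<phi> S"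
    using tendsto_diff[OF tendsto_const \<open>m \<longlonglongrightarrow> 0\<close>] by simp
  show ?thesis
    unfolding fixation_prob_is_def
    by (rule tendsto_sandwich[OF always_eventually always_eventually lim tendsto_const])
       (use lower upper in auto)
qed

definition moran_drift ::
  "(nat \<Rightarrow> nat \<Rightarrow> bool) \<Rightarrow> (nat \<Rightarrow> nat \<Rightarrow> bool) \<Rightarrow> nat \<Rightarrow> (nat set \<Rightarrow> real) \<Rightarrow> nat set \<Rightarrow> real" where
  "moran_drift GA GB N f S =
     (\<Sum>x\<in>vset N. (\<Sum>y\<in>nbrs (moran_graph GA GB S x) N x. f (moran_succ S x y) - f S)
        / real (card (nbrs (moran_graph GA GB S x) N x)))"

lemma moran_expect_eq_drift:
  assumes "N > 0" and "\<And>x. x \<in> vset N \<Longrightarrow> nbrs GA N x \<noteq> {} \<and> nbrs GB N x \<noteq> {}"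
  shows "moran_expect GA GB N f S = f S + moran_drift GA GB N f S / real N"
proof -
  have "moran_expect GA GB N f S - f S * moran_expect GA GB N (\<lambda>_. 1) S = moran_drift GA GB N f S / real N"
    unfolding moran_expect_def moran_drift_def
    by (simp add: sum_distrib_left sum_divide_distrib sum_subtractf[symmetric] diff_divide_distrib
        del: sum_constant) (simp add: mult.commute)
  then show ?thesis
    using moran_expect_one[OF assms] by simp
qed

lemma moran_drift_divide:
  "moran_drift GA GB N (\<lambda>T. f T / c) S = moran_drift GA GB N f S / c"
  unfolding moran_drift_def by (simp add: sum_divide_distrib diff_divide_distrib mult.commute)

text \<open>The loop \<open>y = x\<close> contributes nothing, as \<open>moran_succ S x x = S\<close>; so the adjacency test
  can be replaced by any \<open>Q\<close> that agrees with it off the diagonal.\<close>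

lemma moran_drift_mult_eq_sum:
  assumes deg: "\<And>x. x \<in> vset N \<Longrightarrow> real (card (nbrs (moran_graph GA GB S x) N x)) * c x = D"
    and adj: "\<And>x y. x \<in> vset N \<Longrightarrow> y \<in> vset N \<Longrightarrow> moran_graph GA GB S x x y \<longleftrightarrow> x \<noteq> y \<and> Q x y"
  shows "D * moran_drift GA GB N f S =
    (\<Sum>x\<in>vset N. c x * (\<Sum>y\<in>vset N. if Q x y then f (moran_succ S x y) - f S else 0))"
  unfolding moran_drift_def sum_distrib_left[of D]
proof (intro sum.cong refl)
  fix x assume x: "x \<in> vset N"
  let ?A = "nbrs (moran_graph GA GB S x) N x"
  have "(\<Sum>y\<in>?A. f (moran_succ S x y) - f S) = (\<Sum>y\<in>vset N. if Q x y then f (moran_succ S x y) - f S else 0)"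
    unfolding nbrs_def sum.inter_filter[OF finite_vset]
    using adj[OF x] by (intro sum.cong refl) (auto simp: moran_succ_def insert_absorb)
  moreover have "D * ((\<Sum>y\<in>?A. f (moran_succ S x y) - f S) / real (card ?A))
      = c x * (\<Sum>y\<in>?A. f (moran_succ S x y) - f S)"
    using deg[OF x, symmetric] by (cases "?A = {}") auto
  ultimately show "D * ((\<Sum>y\<in>?A. f (moran_succ S x y) - f S) / real (card ?A))
      = c x * (\<Sum>y\<in>vset N. if Q x y then f (moran_succ S x y) - f S else 0)"
    by simp
qed

section \<open>The complete graph with one edge removed\<close>

lemma real_card_Diff_singleton:
  "finite A \<Longrightarrow> y \<in> A \<Longrightarrow> real (card (A - {y})) = real (card A) - 1"
  using card_gt_0_iff[of A] by (auto simp: of_nat_diff)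

lemma real_card_vset_Diff:
  "S \<subseteq> vset N \<Longrightarrow> real (card (vset N - S)) = real N - real (card S)"
  using card_Diff_subset[of S "vset N"] card_mono[of "vset N" S] finite_subset[of S "vset N"]
  by (simp add: of_nat_diff)

lemma real_card_nbrs_complete_graph:
  "x \<in> vset N \<Longrightarrow> real (card (nbrs complete_graph N x)) = real N - 1"
proof -
  assume "x \<in> vset N"
  moreover have "nbrs complete_graph N x = vset N - {x}"
    by (auto simp: nbrs_def complete_graph_def)
  ultimately show ?thesis
    by (simp add: real_card_Diff_singleton del: card_Diff_insert)
qed

lemma real_card_nbrs_complete_minus_edge:
  assumes "u \<in> vset N" "v \<in> vset N" "u \<noteq> v" "x \<in> vset N"
  shows "real (card (nbrs (complete_minus_edge u v) N x))
           = (if x = u \<or> x = v then real N - 2 else real N - 1)"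
proof -
  have "nbrs (complete_minus_edge u v) N x =
          vset N - {x} - (if x = u then {v} else if x = v then {u} else {})"
    using assms(3) by (auto simp: nbrs_def complete_minus_edge_def doubleton_eq_iff)
  then show ?thesis
    using assms by (simp add: real_card_Diff_singleton del: card_Diff_insert)
qed

lemma nbrs_edge_pair_ne_empty:
  assumes "N \<ge> 3" "u \<in> vset N" "v \<in> vset N" "u \<noteq> v" "x \<in> vset N"
  shows "nbrs complete_graph N x \<noteq> {} \<and> nbrs (complete_minus_edge u v) N x \<noteq> {}"
  using real_card_nbrs_complete_graph[OF assms(5)] real_card_nbrs_complete_minus_edge[OF assms(2-5)]
    assms(1) by (auto split: if_splits)

text \<open>Kept opaque: if the simplifier could rewrite \<open>A - {u, v}\<close> (e.g. to \<open>A\<close> when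
  \<open>u, v \<notin> A\<close>), it would lose the facts \<open>y \<noteq> u\<close>, \<open>y \<noteq> v\<close> inside sums over this set.\<close>

definition off_edge :: "nat \<Rightarrow> nat \<Rightarrow> nat set \<Rightarrow> nat set" where
  "off_edge u v A = A - {u, v}"

lemma mem_off_edge [simp]: "y \<in> off_edge u v A \<longleftrightarrow> y \<in> A \<and> y \<noteq> u \<and> y \<noteq> v"
  by (auto simp: off_edge_def)

lemma real_card_off_edge:
  assumes "finite A" "u \<noteq> v"
  shows "real (card (off_edge u v A)) = real (card A) - (if u \<in> A then 1 else 0) - (if v \<in> A then 1 else 0)"
proof -
  have "real (card (A \<inter> {u, v})) = (if u \<in> A then 1 else 0) + (if v \<in> A then 1 else 0)"
    using assms(2) by (cases "u \<in> A"; cases "v \<in> A") (simp_all add: Int_insert_right)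
  then show ?thesis
    using card_Int_Diff[OF assms(1), of "{u, v}"] by (simp add: off_edge_def)
qed

lemma sum_vset_off_edge:
  assumes "u \<in> vset N" "v \<in> vset N" "u \<noteq> v" "S \<subseteq> vset N"
  shows "sum f (vset N) = f u + f v + sum f (off_edge u v S) + sum f (off_edge u v (vset N - S))"
proof -
  let ?A = "off_edge u v S" and ?B = "off_edge u v (vset N - S)"
  have "vset N = insert u (insert v (?A \<union> ?B))"
    using assms by auto
  then have "sum f (vset N) = sum f (insert u (insert v (?A \<union> ?B)))"
    by (rule arg_cong)
  also have "\<dots> = f u + f v + sum f (?A \<union> ?B)"
    using assms finite_subset[OF assms(4)] by (simp add: off_edge_def add.assoc)
  also have "sum f (?A \<union> ?B) = sum f ?A + sum f ?B"
    using finite_subset[OF assms(4)] by (intro sum.union_disjoint) (auto simp: off_edge_def)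
  finally show ?thesis
    by (simp only: add.assoc)
qed

text \<open>With \<open>a + b = |T|\<close> as in the statement, \<open>b(b - 1)/2\<close> is the indicator of \<open>b = 2\<close>
  (\<open>both_in\<close>) and \<open>b(3 - b)/2\<close> that of \<open>b \<ge> 1\<close> (\<open>any_in\<close>).\<close>

definition fixation_potential :: "(nat set \<Rightarrow> real) \<Rightarrow> nat \<Rightarrow> nat set \<Rightarrow> real" where
  "fixation_potential w N T = ((real N - 2) * real (card T) + w T) / (real N - 1) ^ 2"

definition both_in :: "nat \<Rightarrow> nat \<Rightarrow> nat set \<Rightarrow> real" where
  "both_in u v T = (if u \<in> T \<and> v \<in> T then 1 else 0)"

definition any_in :: "nat \<Rightarrow> nat \<Rightarrow> nat set \<Rightarrow> real" where
  "any_in u v T = (if u \<in> T \<or> v \<in> T then 1 else 0)"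

lemma fixation_potential_bounds:
  assumes "N \<ge> 2" "T \<subseteq> vset N" "0 \<le> w T" "w T \<le> 1"
  shows "0 \<le> fixation_potential w N T \<and> fixation_potential w N T \<le> 1"
proof -
  have "real (card T) \<le> real N"
    using card_mono[OF finite_vset assms(2)] by simp
  then have "(real N - 2) * real (card T) \<le> (real N - 2) * real N"
    using assms(1) by (intro mult_left_mono) auto
  then have "(real N - 2) * real (card T) + w T \<le> (real N - 1) ^ 2"
    using assms(4) by (simp add: power2_eq_square algebra_simps)
  moreover have "0 \<le> (real N - 2) * real (card T) + w T"
    using assms(1,3) by simp
  ultimately show ?thesis
    unfolding fixation_potential_def using assms(1) by simp
qed

lemma fixation_potential_vset:
  assumes "N \<ge> 2" "w (vset N) = 1"
  shows "fixation_potential w N (vset N) = 1"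
proof -
  have "(real N - 2) * real N + 1 = (real N - 1) ^ 2"
    by (simp add: power2_eq_square algebra_simps)
  moreover have "(real N - 1) ^ 2 \<noteq> 0"
    using assms(1) by simp
  ultimately show ?thesis
    unfolding fixation_potential_def using assms(2) by simp
qed

lemma fixation_potential_insert_ge:
  assumes "N \<ge> 3" "finite T" "y \<notin> T" "w T \<le> w (insert y T)"
  shows "1 / (real N - 1) ^ 2 \<le> fixation_potential w N (insert y T) - fixation_potential w N T"
proof -
  have "1 \<le> (real N - 2) + (w (insert y T) - w T)"
    using assms(1,4) by simp
  then show ?thesis
    unfolding fixation_potential_def diff_divide_distrib[symmetric] using assms(2,3)
    by (intro divide_right_mono) (auto simp: algebra_simps)
qed

lemma fixation_potential_variance_ge:
  assumes N: "N \<ge> 3" and complete: "GA = complete_graph \<or> GB = complete_graph"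
    and mono: "\<And>T y. w T \<le> w (insert y T)" and T: "T \<in> transient_states N"
  shows "1 / (real N ^ 2 * (real N - 1) ^ 4)
           \<le> moran_expect GA GB N (\<lambda>T'. (fixation_potential w N T' - fixation_potential w N T) ^ 2) T"
proof -
  let ?\<phi> = "fixation_potential w N" and ?\<delta> = "1 / (real N - 1) ^ 2"
  let ?f = "\<lambda>T'. (?\<phi> T' - ?\<phi> T) ^ 2"
  have TV: "T \<subseteq> vset N" and finT: "finite T"
    using T finite_subset[of T "vset N"] by (auto simp: transient_states_def)
  obtain x y where x: "x \<in> T" and y: "y \<in> vset N" "y \<notin> T"
    using T by (auto simp: transient_states_def)
  have xV: "x \<in> vset N" using x TV by blast
  have f: "T' \<subseteq> vset N \<Longrightarrow> 0 \<le> ?f T'" for T' by simp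
  have "\<exists>p\<in>vset N. \<exists>q\<in>nbrs (moran_graph GA GB T p) N p. ?\<delta> \<le> \<bar>?\<phi> (moran_succ T p q) - ?\<phi> T\<bar>"
    using complete
  proof
    assume "GA = complete_graph"
    then have "y \<in> nbrs (moran_graph GA GB T x) N x"
      using x y by (auto simp: nbrs_def moran_graph_def complete_graph_def)
    moreover have "?\<delta> \<le> ?\<phi> (moran_succ T x y) - ?\<phi> T"
      using fixation_potential_insert_ge[OF N finT y(2) mono[of T y]] x by (simp add: moran_succ_def)
    ultimately show ?thesis
      using xV by force
  next
    assume "GB = complete_graph"
    then have "x \<in> nbrs (moran_graph GA GB T y) N y"
      using xV y x by (auto simp: nbrs_def moran_graph_def complete_graph_def)
    moreover have "?\<delta> \<le> ?\<phi> T - ?\<phi> (moran_succ T y x)"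
      using fixation_potential_insert_ge[OF N _ _ mono[of "T - {x}" x]] finT x y
      by (simp add: moran_succ_def insert_absorb)
    ultimately show ?thesis
      using y by force
  qed
  then obtain p q where p: "p \<in> vset N" and q: "q \<in> nbrs (moran_graph GA GB T p) N p"
    and gap: "?\<delta> \<le> \<bar>?\<phi> (moran_succ T p q) - ?\<phi> T\<bar>"
    by blast
  have "?\<delta> ^ 2 \<le> ?f (moran_succ T p q)"
    using power_mono[OF gap, of 2] by simp
  moreover have "1 / (real N ^ 2 * (real N - 1) ^ 4) = ?\<delta> ^ 2 / real N ^ 2"
    by (simp add: power_divide flip: power_mult)
  ultimately have "1 / (real N ^ 2 * (real N - 1) ^ 4) \<le> ?f (moran_succ T p q) / real N ^ 2"
    by (simp add: divide_right_mono)
  also have "\<dots> \<le> moran_expect GA GB N ?f T"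
    by (rule moran_expect_ge_transition[OF TV f p q])
  finally show ?thesis .
qed

lemma moran_drift_complete_minus_edge_complete_graph:
  assumes N: "N \<ge> 3" and u: "u \<in> vset N" and v: "v \<in> vset N" and uv: "u \<noteq> v"
    and S: "S \<subseteq> vset N"
  shows "moran_drift (complete_minus_edge u v) complete_graph N
           (\<lambda>T. (real N - 2) * real (card T) + both_in u v T) S = 0"
proof -
  let ?g = "\<lambda>T. (real N - 2) * real (card T) + both_in u v T"
  have finS: "finite S"
    using finite_subset[OF S] by simp
  have "(real N - 1) * (real N - 2) * moran_drift (complete_minus_edge u v) complete_graph N ?g S =
     (\<Sum>x\<in>vset N. (if x \<in> S \<and> (x = u \<or> x = v) then real N - 1 else real N - 2) *
       (\<Sum>y\<in>vset N. if \<not> (x \<in> S \<and> {x, y} = {u, v}) then ?g (moran_succ S x y) - ?g S else 0))"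
    by (rule moran_drift_mult_eq_sum)
       (auto simp: moran_graph_def real_card_nbrs_complete_graph real_card_nbrs_complete_minus_edge
         u v uv complete_graph_def complete_minus_edge_def)
  also have "\<dots> = 0"
    by (cases "u \<in> S"; cases "v \<in> S")
       (simp_all add: sum_vset_off_edge[OF u v uv S] real_card_off_edge finS real_card_vset_Diff[OF S] moran_succ_def
         doubleton_eq_iff both_in_def card_insert_if real_card_Diff_singleton subsetD[OF S]
         u v uv not_sym[OF uv] algebra_simps del: card_Diff_insert)
  finally show ?thesis
    using N by simp
qed

lemma moran_drift_complete_graph_complete_minus_edge:
  assumes N: "N \<ge> 3" and u: "u \<in> vset N" and v: "v \<in> vset N" and uv: "u \<noteq> v"
    and S: "S \<subseteq> vset N"
  shows "moran_drift complete_graph (complete_minus_edge u v) N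
           (\<lambda>T. (real N - 2) * real (card T) + any_in u v T) S = 0"
proof -
  let ?g = "\<lambda>T. (real N - 2) * real (card T) + any_in u v T"
  have finS: "finite S"
    using finite_subset[OF S] by simp
  have "(real N - 1) * (real N - 2) * moran_drift complete_graph (complete_minus_edge u v) N ?g S =
     (\<Sum>x\<in>vset N. (if x \<notin> S \<and> (x = u \<or> x = v) then real N - 1 else real N - 2) *
       (\<Sum>y\<in>vset N. if \<not> (x \<notin> S \<and> {x, y} = {u, v}) then ?g (moran_succ S x y) - ?g S else 0))"
    by (rule moran_drift_mult_eq_sum)
       (auto simp: moran_graph_def real_card_nbrs_complete_graph real_card_nbrs_complete_minus_edge
         u v uv complete_graph_def complete_minus_edge_def)
  also have "\<dots> = 0"
    by (cases "u \<in> S"; cases "v \<in> S")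
       (simp_all add: sum_vset_off_edge[OF u v uv S] real_card_off_edge finS real_card_vset_Diff[OF S] moran_succ_def
         doubleton_eq_iff any_in_def card_insert_if real_card_Diff_singleton subsetD[OF S]
         u v uv not_sym[OF uv] algebra_simps del: card_Diff_insert)
  finally show ?thesis
    using N by simp
qed

lemma fixation_prob_is_fixation_potential:
  assumes N: "N \<ge> 3" and S: "S \<subseteq> vset N"
    and complete: "GA = complete_graph \<or> GB = complete_graph"
    and deg: "\<And>x. x \<in> vset N \<Longrightarrow> nbrs GA N x \<noteq> {} \<and> nbrs GB N x \<noteq> {}"
    and drift: "\<And>T. T \<subseteq> vset N \<Longrightarrow> moran_drift GA GB N (\<lambda>T. (real N - 2) * real (card T) + w T) T = 0"
    and w01: "\<And>T. 0 \<le> w T \<and> w T \<le> 1" and mono: "\<And>T y. w T \<le> w (insert y T)"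
    and "w {} = 0" and "w (vset N) = 1"
  shows "fixation_prob_is GA GB N S (fixation_potential w N S)"
proof (rule fixation_prob_is_harmonic[OF S])
  show "N > 0" using N by simp
  show "moran_expect GA GB N (fixation_potential w N) T = fixation_potential w N T"
    if "T \<subseteq> vset N" for T
    using N drift[OF that] unfolding fixation_potential_def
    by (simp add: moran_expect_eq_drift[OF _ deg] moran_drift_divide)
  show "0 \<le> fixation_potential w N T \<and> fixation_potential w N T \<le> 1" if "T \<subseteq> vset N" for T
    using fixation_potential_bounds[OF _ that] N w01 by simp
  show "fixation_potential w N {} = 0"
    using \<open>w {} = 0\<close> by (simp add: fixation_potential_def)
  show "fixation_potential w N (vset N) = 1"
    using fixation_potential_vset N \<open>w (vset N) = 1\<close> by simp
  show "1 / (real N ^ 2 * (real N - 1) ^ 4)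
      \<le> moran_expect GA GB N (\<lambda>T'. (fixation_potential w N T' - fixation_potential w N T) ^ 2) T"
    if "T \<in> transient_states N" for T
    by (rule fixation_potential_variance_ge[OF N complete mono that])
qed (use deg N in auto)

theorem mainTheorem2:
  fixes N u v :: nat and S :: "nat set"
  assumes "N \<ge> 3"
    and "u \<in> vset N" and "v \<in> vset N" and "u \<noteq> v"
    and "S \<subseteq> vset N"
  defines "a \<equiv> card (S - {u, v})" and "b \<equiv> card (S \<inter> {u, v})"
  shows "fixation_prob_is (complete_minus_edge u v) complete_graph N S
           (((real a + real b) * (real N - 2) + real b * (real b - 1) / 2) / (real N - 1)^2)
       \<and> fixation_prob_is complete_graph (complete_minus_edge u v) N S
           (((real a + real b) * (real N - 2) + real b * (3 - real b) / 2) / (real N - 1)^2)"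
proof -
  have "real a + real b = real (card S)"
    using card_Int_Diff[OF finite_subset[OF assms(5) finite_vset], of "{u, v}"]
    by (simp add: a_def b_def)
  moreover have "real b * (real b - 1) / 2 = both_in u v S" and "real b * (3 - real b) / 2 = any_in u v S"
    using \<open>u \<noteq> v\<close>
    by (cases "u \<in> S"; cases "v \<in> S"; simp add: b_def both_in_def any_in_def Int_insert_right)+
  moreover have "fixation_prob_is (complete_minus_edge u v) complete_graph N S
                   (fixation_potential (both_in u v) N S)"
    using assms(1-5) nbrs_edge_pair_ne_empty[OF assms(1-4)]
    by (intro fixation_prob_is_fixation_potential moran_drift_complete_minus_edge_complete_graph)
       (auto simp: both_in_def)
  moreover have "fixation_prob_is complete_graph (complete_minus_edge u v) N S
                   (fixation_potential (any_in u v) N S)"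
    using assms(1-5) nbrs_edge_pair_ne_empty[OF assms(1-4)]
    by (intro fixation_prob_is_fixation_potential moran_drift_complete_graph_complete_minus_edge)
       (auto simp: any_in_def)
  ultimately show ?thesis
    unfolding fixation_potential_def by (simp add: mult.commute)
qed

end
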